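(* For every integer $n\ge2$: (1) $(n+1)\,\mathrm C_n(x,y)=(y+1)(2n-1)\,\mathrm C_{n-1}(x,y)+\bigl(4x-(y+1)^2\bigr)(n-2)\,\mathrm C_{n-2}(x,y)$; (2) $n\,\mathrm C^{\mathrm B}_n(x,y)=(y+1)(2n-1)\,\mathrm C^{\mathrm B}_{n-1}(x,y)+\bigl(4x-(y+1)^2\bigr)(n-1)\,\mathrm C^{\mathrm B}_{n-2}(x,y)$.
   Context: A set partition of a finite set $\mathcal X\subset\mathbb Z$ is a set of nonempty pairwise disjoint sets (blocks) with union $\mathcal X$. A pair $(i,j)$ is an arc of $\Lambda$ if $i<j$ lie in the same block and $j$ is the least element of that block greater than $i$; $\mathrm{Arc}(\Lambda)$ is the set of arcs, $\mathrm{Cov}(\Lambda)=\{(i,j)\in\mathrm{Arc}(\Lambda):j=i+1\}$. $\Lambda$ is noncrossing if there are no arcs $(i,k),(j,l)$ with $i<j<k<l$. $\mathrm{NC}(n)$ is the set of noncrossing partitions of $[n]=\{1,\dots,n\}$ and $\mathrm C_n(x,y)=\sum_{\Lambda\in\mathrm{NC}(n)}x^{|\mathrm{Arc}(\Lambda)\setminus\mathrm{Cov}(\Lambda)|}y^{|\mathrm{Cov}(\Lambda)|}$. With $[\pm n]=\{\pm1,\dots,\pm n\}$, $\Pi^{\mathrm B}(n)$ is the set of partitions $\Lambda$ of $\{0\}\cup[\pm n]$ with $(i,j)\in\mathrm{Arc}(\Lambda)$ iff $(-j,-i)\in\mathrm{Arc}(\Lambda)$, $\widetilde{\mathrm{NC}}^{\mathrm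 B}(n)$ is the set of $\Lambda\in\Pi^{\mathrm B}(n)$ such that whenever $(i,k),(j,l)\in\mathrm{Arc}(\Lambda)$ with $i<j<k<l$ we have $(i,k)=(-l,-j)$, and $\mathrm C^{\mathrm B}_n(x,y)=\sum_{\Lambda\in\widetilde{\mathrm{NC}}^{\mathrm B}(n)}x^{|\mathrm{Arc}(\Lambda)\setminus\mathrm{Cov}(\Lambda)|/2}y^{|\mathrm{Cov}(\Lambda)|/2}$. *)

theory Defs
  imports Main "HOL-Library.Disjoint_Sets"
begin

definition Arc :: "int set set \<Rightarrow> (int \<times> int) set" where
  "Arc P = {(i, j). \<exists>B\<in>P. i \<in> B \<and> j \<in> B \<and> i < j \<and> (\<forall>k\<in>B. i < k \<longrightarrow> j \<le> k)}"

definition Cov :: "int set set \<Rightarrow> (int \<times> int) set" where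
  "Cov P = {(i, j) \<in> Arc P. j = i + 1}"

definition noncrossing :: "int set set \<Rightarrow> bool" where
  "noncrossing P \<longleftrightarrow>
     \<not> (\<exists>i j k l. (i, k) \<in> Arc P \<and> (j, l) \<in> Arc P \<and> i < j \<and> j < k \<and> k < l)"

definition NC :: "nat \<Rightarrow> int set set set" where
  "NC n = {P. partition_on {1..int n} P \<and> noncrossing P}"

definition Cat :: "nat \<Rightarrow> 'a::comm_ring_1 \<Rightarrow> 'a \<Rightarrow> 'a" where
  "Cat n x y = (\<Sum>P\<in>NC n. x ^ card (Arc P - Cov P) * y ^ card (Cov P))"

text \<open>Type B partitions of {0} \<union> [\<plusminus>n] = {-n..n}: arc-symmetric, and (standard convention)
  the only block equal to its negative is the zero block.\<close>
definition PiB :: "nat \<Rightarrow> int set set set" where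
  "PiB n = {P. partition_on {- int n..int n} P
              \<and> (\<forall>i j. (i, j) \<in> Arc P \<longleftrightarrow> (- j, - i) \<in> Arc P)
              \<and> (\<forall>B\<in>P. uminus ` B = B \<longrightarrow> 0 \<in> B)}"

definition NCB_tilde :: "nat \<Rightarrow> int set set set" where
  "NCB_tilde n = {P \<in> PiB n. \<forall>i j k l. (i, k) \<in> Arc P \<and> (j, l) \<in> Arc P \<and> i < j \<and> j < k \<and> k < l
                      \<longrightarrow> (i, k) = (- l, - j)}"

definition CatB :: "nat \<Rightarrow> 'a::comm_ring_1 \<Rightarrow> 'a \<Rightarrow> 'a" where
  "CatB n x y = (\<Sum>P\<in>NCB_tilde n. x ^ (card (Arc P - Cov P) div 2) * y ^ (card (Cov P) div 2))"

end

(*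
  Cutting a noncrossing partition of [n] along the arc that ends at n gives the Catalan-type
  convolution C_n = (1+y) C_(n-1) + x sum_(i=1..n-2) C_i C_(n-1-i); in type B the two mirror arcs at
  n and -n are cut together, giving C^B_n = (1+y) C^B_(n-1) + 2x sum_(i<n-1) C^B_i C_(n-1-i).
  Hence D = sum_(k>=1) C_k X^k solves x X D^2 + ((1+y) X - 1) D + X = 0 and the series of the C^B_k
  is B = -1/(2xXD + (1+y)X - 1), i.e. 1/sqrt(Delta) for the discriminant
  Delta = 1 - 2(1+y)X + ((1+y)^2 - 4x)X^2. Differentiating these algebraic equations yields linear
  first-order differential equations with polynomial coefficients, and comparing coefficients gives
  the two recurrences.
  The cutting is done on arc sets: a partition of a finite set of integers is determined by its
  arcs, and any set of arcs in which every point starts and ends at most one arc is the arc set of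
  a partition.
*)

theory Submission
  imports Defs "HOL-Computational_Algebra.Formal_Power_Series"
begin

unbundle fps_syntax

section \<open>Recurrences from algebraic generating functions\<close>

lemma fps_quadratic_ode:
  fixes D :: "'a::comm_ring_1 fps" and \<alpha> \<beta> :: 'a
  defines "a \<equiv> fps_const \<alpha>" and "b \<equiv> fps_const \<beta>" and "X \<equiv> fps_X"
  assumes eq: "a * X * D^2 + b * X * D - D + X = 0"
  shows "(1 - 2*b*X + (b^2 - 4*a)*X^2) * (D + X * fps_deriv D)
           - ((b^2 - 4*a)*X - b) * X * D = 2 * X"
proof -
  define Q where "Q = a * X * D^2 + b * X * D - D + X"
  define D' where "D' = fps_deriv D"
  have dQ: "fps_deriv Q = a*D^2 + 2*a*X*D*D' + b*D + b*X*D' - D' + 1"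
    by (simp add: Q_def a_def b_def X_def D'_def power2_eq_square algebra_simps)
  \<comment> \<open>\<open>(2aXD + bX - 1)\<^sup>2\<close> is the discriminant plus \<open>4aXQ\<close>; in this combination
    of \<open>Q\<close> and \<open>Q'\<close> the term \<open>D\<^sup>2\<close> cancels.\<close>
  have "(1 - 2*b*X + (b^2 - 4*a)*X^2) * (D + X*D') - ((b^2 - 4*a)*X - b) * X * D - 2 * X
      = (2*a*X*D + b*X - 1) * (X * fps_deriv Q + Q) - 2*X*(2*a*D + 2*a*X*D' + b) * Q"
    unfolding dQ by (simp add: Q_def algebra_simps power2_eq_square power3_eq_cube)
  then show ?thesis using eq by (simp add: Q_def D'_def)
qed

lemma fps_quadratic_coeff_recurrence:
  fixes D :: "'a::comm_ring_1 fps" and \<alpha> \<beta> :: 'a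
  assumes eq: "fps_const \<alpha> * fps_X * D^2 + fps_const \<beta> * fps_X * D - D + fps_X = 0"
    and n: "n \<ge> 2"
  shows "of_nat (n+1) * D$n
           = \<beta> * of_nat (2*n-1) * D$(n-1) + (4*\<alpha> - \<beta>^2) * of_nat (n-2) * D$(n-2)"
proof -
  define c where "c = \<beta>^2 - 4*\<alpha>"
  define F where "F = D + fps_X * fps_deriv D"
  have F: "F $ k = of_nat (k+1) * D $ k" for k
    by (cases k) (simp_all add: F_def fps_X_mult_nth algebra_simps)
  have "(1 - 2*fps_const \<beta>*fps_X + (fps_const \<beta>^2 - 4*fps_const \<alpha>)*fps_X^2) * F
          - ((fps_const \<beta>^2 - 4*fps_const \<alpha>)*fps_X - fps_const \<beta>) * fps_X * D = 2 * fps_X"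
    unfolding F_def using fps_quadratic_ode[OF eq] .
  then have "F - fps_const (2*\<beta>) * (fps_X * F) + fps_const c * (fps_X^2 * F)
          - fps_const c * (fps_X^2 * D) + fps_const \<beta> * (fps_X * D) = 2 * fps_X"
    by (simp add: c_def fps_const_power numeral_fps_const algebra_simps power2_eq_square)
  then have "(F - fps_const (2*\<beta>) * (fps_X * F) + fps_const c * (fps_X^2 * F)
          - fps_const c * (fps_X^2 * D) + fps_const \<beta> * (fps_X * D)) $ n = 0"
    using n by (simp add: fps_X_mult_nth fps_numeral_nth)
  moreover obtain k where k: "n = Suc (Suc k)" using n by (metis add_2_eq_Suc le_Suc_ex)
  ultimately have "of_nat (k+3) * D$(k+2) - 2*\<beta> * (of_nat (k+2) * D$(k+1))
      + c * (of_nat (k+1) * D$k) - c * D$k + \<beta> * D$(k+1) = 0"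
    by (simp add: F fps_X_power_mult_nth fps_X_mult_nth numeral_3_eq_3)
  then show ?thesis
    by (simp add: k c_def algebra_simps of_nat_Suc)
qed

lemma fps_reciprocal_ode:
  fixes D B :: "'a::comm_ring_1 fps" and \<alpha> \<beta> :: 'a
  defines "a \<equiv> fps_const \<alpha>" and "b \<equiv> fps_const \<beta>" and "X \<equiv> fps_X"
  assumes eqD: "a * X * D^2 + b * X * D - D + X = 0"
    and eqB: "B * (2*a*X*D + b*X - 1) = -1"
  shows "(1 - 2*b*X + (b^2 - 4*a)*X^2) * fps_deriv B = (b - (b^2 - 4*a)*X) * B"
proof -
  define Q where "Q = a * X * D^2 + b * X * D - D + X"
  define S where "S = 2*a*X*D + b*X - 1"
  define D' where "D' = fps_deriv D"
  define B' where "B' = fps_deriv B"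
  have dQ: "fps_deriv Q = a*D^2 + 2*a*X*D*D' + b*D + b*X*D' - D' + 1"
    by (simp add: Q_def a_def b_def X_def D'_def power2_eq_square algebra_simps)
  have dS: "fps_deriv S = 2*a*D + 2*a*X*D' + b"
    by (simp add: S_def a_def b_def X_def D'_def algebra_simps)
  have dBS: "fps_deriv (B * S) = 0"
    using eqB by (simp add: S_def)
  \<comment> \<open>\<open>S\<^sup>2\<close> is the discriminant plus \<open>4aXQ\<close>, so \<open>B = -1/S\<close> is a square root of its
    inverse.\<close>
  have "(1 - 2*b*X + (b^2 - 4*a)*X^2) * B' - (b - (b^2 - 4*a)*X) * B
      = S * fps_deriv (B * S) - 4*a*X*Q*B' - 2*a*B*(X * fps_deriv Q + Q)"
    unfolding dQ fps_deriv_mult dS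
    by (simp add: Q_def S_def B'_def algebra_simps power2_eq_square power3_eq_cube)
  then show ?thesis using eqD dBS by (simp add: Q_def B'_def)
qed

lemma fps_reciprocal_coeff_recurrence:
  fixes D B :: "'a::comm_ring_1 fps" and \<alpha> \<beta> :: 'a
  assumes eqD: "fps_const \<alpha> * fps_X * D^2 + fps_const \<beta> * fps_X * D - D + fps_X = 0"
    and eqB: "B * (2 * fps_const \<alpha> * fps_X * D + fps_const \<beta> * fps_X - 1) = -1"
    and n: "n \<ge> 2"
  shows "of_nat n * B$n
           = \<beta> * of_nat (2*n-1) * B$(n-1) + (4*\<alpha> - \<beta>^2) * of_nat (n-1) * B$(n-2)"
proof -
  define c where "c = \<beta>^2 - 4*\<alpha>"
  define B' where "B' = fps_deriv B"
  have "(1 - 2*fps_const \<beta>*fps_X + (fps_const \<beta>^2 - 4*fps_const \<alpha>)*fps_X^2) * B'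
          = (fps_const \<beta> - (fps_const \<beta>^2 - 4*fps_const \<alpha>)*fps_X) * B"
    unfolding B'_def using fps_reciprocal_ode[OF eqD eqB] .
  then have "B' - fps_const (2*\<beta>) * (fps_X * B') + fps_const c * (fps_X^2 * B')
          - fps_const \<beta> * B + fps_const c * (fps_X * B) = 0"
    by (simp add: c_def fps_const_power numeral_fps_const algebra_simps power2_eq_square)
  then have "(B' - fps_const (2*\<beta>) * (fps_X * B') + fps_const c * (fps_X^2 * B')
          - fps_const \<beta> * B + fps_const c * (fps_X * B)) $ (n-1) = 0"
    by simp
  moreover obtain k where k: "n = Suc (Suc k)" using n by (metis add_2_eq_Suc le_Suc_ex)
  ultimately have "of_nat (k+2) * B$(k+2) - 2*\<beta> * (of_nat (k+1) * B$(k+1)) + c * (of_nat k * B$k)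
      - \<beta> * B$(k+1) + c * B$k = 0"
    by (cases k) (simp_all add: B'_def fps_X_power_mult_nth fps_X_mult_nth)
  then show ?thesis
    by (simp add: k c_def algebra_simps of_nat_Suc)
qed

lemma convolution_fps_equation:
  fixes c :: "nat \<Rightarrow> 'a::comm_ring_1" and x y :: 'a
  defines "D \<equiv> Abs_fps (\<lambda>k. if k = 0 then 0 else c k)"
  assumes c1: "c 1 = 1"
    and rec: "\<And>n. n \<ge> 2 \<Longrightarrow> c n = (1+y) * c (n-1) + x * (\<Sum>i=1..n-2. c i * c (n-1-i))"
  shows "fps_const x * fps_X * D^2 + fps_const (1+y) * fps_X * D - D + fps_X = 0"
proof (rule fps_ext)
  fix m
  have D: "D $ k = (if k = 0 then 0 else c k)" for k
    by (simp add: D_def)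
  have "(fps_const x * fps_X * D^2 + fps_const (1+y) * fps_X * D - D + fps_X) $ m
      = (if m = 0 then 0
         else x * (D^2) $ (m-1) + (1+y) * D $ (m-1) - c m + (if m = 1 then 1 else 0))"
    by (simp add: D mult.assoc fps_X_mult_nth)
  also have "\<dots> = 0"
  proof (cases "m \<ge> 2")
    case True
    have "(D^2) $ (m-1) = (\<Sum>i=0..m-1. D $ i * D $ (m-1-i))"
      by (simp add: power2_eq_square fps_mult_nth)
    also have "\<dots> = (\<Sum>i=1..m-2. c i * c (m-1-i))"
      using True by (intro sum.mono_neutral_cong_right) (auto simp: D)
    finally show ?thesis using True rec[OF True] by (simp add: D)
  next
    case False
    then consider "m = 0" | "m = 1" by linarith
    then show ?thesis by cases (use c1 in \<open>simp_all add: D power2_eq_square\<close>)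
  qed
  finally show "(fps_const x * fps_X * D^2 + fps_const (1+y) * fps_X * D - D + fps_X) $ m = 0 $ m"
    by simp
qed

lemma convolutionB_fps_equation:
  fixes c cb :: "nat \<Rightarrow> 'a::comm_ring_1" and x y :: 'a
  defines "D \<equiv> Abs_fps (\<lambda>k. if k = 0 then 0 else c k)" and "B \<equiv> Abs_fps cb"
  assumes cb0: "cb 0 = 1"
    and recB: "\<And>n. n \<ge> 1 \<Longrightarrow> cb n = (1+y) * cb (n-1) + 2 * x * (\<Sum>i<n-1. cb i * c (n-1-i))"
  shows "B * (2 * fps_const x * fps_X * D + fps_const (1+y) * fps_X - 1) = -1"
proof (rule fps_ext)
  fix m
  have D: "D $ k = (if k = 0 then 0 else c k)" and B: "B $ k = cb k" for k
    by (simp_all add: D_def B_def)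
  have "B * (2 * fps_const x * fps_X * D + fps_const (1+y) * fps_X - 1)
      = fps_const (2*x) * (fps_X * (B*D)) + fps_const (1+y) * (fps_X * B) - B"
    by (simp add: algebra_simps numeral_fps_const)
  then have "(B * (2 * fps_const x * fps_X * D + fps_const (1+y) * fps_X - 1)) $ m
      = (if m = 0 then - cb 0 else 2 * x * (B*D) $ (m-1) + (1+y) * cb (m-1) - cb m)"
    by (simp add: B fps_X_mult_nth)
  also have "\<dots> = (-1 :: 'a fps) $ m"
  proof (cases "m = 0")
    case False
    have "(B*D) $ (m-1) = (\<Sum>i<m-1. cb i * c (m-1-i))"
      unfolding fps_mult_nth B D using False
      by (intro sum.mono_neutral_cong_right) auto
    then show ?thesis using False recB[of m] by simp
  qed (simp add: cb0)
  finally show "(B * (2 * fps_const x * fps_X * D + fps_const (1+y) * fps_X - 1)) $ m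
      = (-1 :: 'a fps) $ m" .
qed

lemma convolution_imp_P_recurrence:
  fixes c :: "nat \<Rightarrow> 'a::comm_ring_1" and x y :: 'a
  assumes c1: "c 1 = 1"
    and rec: "\<And>n. n \<ge> 2 \<Longrightarrow> c n = (1+y) * c (n-1) + x * (\<Sum>i=1..n-2. c i * c (n-1-i))"
    and n: "n \<ge> 2"
  shows "of_nat (n+1) * c n = (y+1) * of_nat (2*n-1) * c (n-1)
           + (4*x - (y+1)^2) * of_nat (n-2) * c (n-2)"
proof -
  define D where "D = Abs_fps (\<lambda>k. if k = 0 then 0 else c k)"
  have "of_nat (n+1) * D$n
      = (1+y) * of_nat (2*n-1) * D$(n-1) + (4*x - (1+y)^2) * of_nat (n-2) * D$(n-2)"
    using fps_quadratic_coeff_recurrence[OF convolution_fps_equation[OF c1 rec] n] unfolding D_def .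
  \<comment> \<open>\<open>D\<close> differs from \<open>c\<close> only at \<open>0\<close>, which enters only for \<open>n = 2\<close>, with factor \<open>n - 2 = 0\<close>.\<close>
  then show ?thesis using n by (cases "n = 2") (simp_all add: D_def add.commute)
qed

lemma convolutionB_imp_P_recurrence:
  fixes c cb :: "nat \<Rightarrow> 'a::comm_ring_1" and x y :: 'a
  assumes c1: "c 1 = 1"
    and rec: "\<And>n. n \<ge> 2 \<Longrightarrow> c n = (1+y) * c (n-1) + x * (\<Sum>i=1..n-2. c i * c (n-1-i))"
    and cb0: "cb 0 = 1"
    and recB: "\<And>n. n \<ge> 1 \<Longrightarrow> cb n = (1+y) * cb (n-1) + 2 * x * (\<Sum>i<n-1. cb i * c (n-1-i))"
    and n: "n \<ge> 2"
  shows "of_nat n * cb n = (y+1) * of_nat (2*n-1) * cb (n-1)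
           + (4*x - (y+1)^2) * of_nat (n-1) * cb (n-2)"
  using fps_reciprocal_coeff_recurrence[OF convolution_fps_equation[OF c1 rec]
      convolutionB_fps_equation[OF cb0 recB] n]
  by (simp add: add.commute)

section \<open>Partitions and their arcs\<close>

definition block_arcs :: "int set \<Rightarrow> (int \<times> int) set" where
  "block_arcs B = {(i, j). i \<in> B \<and> j \<in> B \<and> i < j \<and> (\<forall>k\<in>B. i < k \<longrightarrow> j \<le> k)}"

lemma Arc_eq_UN_block_arcs: "Arc P = (\<Union>B\<in>P. block_arcs B)"
  unfolding Arc_def block_arcs_def by blast

definition arc_system :: "int set \<Rightarrow> (int \<times> int) set \<Rightarrow> bool" where
  "arc_system S A \<longleftrightarrow> (\<forall>i j. (i, j) \<in> A \<longrightarrow> i \<in> S \<and> j \<in> S \<and> i < j)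
     \<and> (\<forall>i j j'. (i, j) \<in> A \<longrightarrow> (i, j') \<in> A \<longrightarrow> j = j')
     \<and> (\<forall>i i' j. (i, j) \<in> A \<longrightarrow> (i', j) \<in> A \<longrightarrow> i = i')"

lemma arc_system_subset: "arc_system S A \<Longrightarrow> A' \<subseteq> A \<Longrightarrow> arc_system S A'"
  unfolding arc_system_def by blast

lemma finite_arc_system: "finite S \<Longrightarrow> arc_system S A \<Longrightarrow> finite A"
  unfolding arc_system_def by (rule finite_subset[of A "S \<times> S"]) auto

lemma partition_on_block_eq:
  assumes "partition_on S P" "B \<in> P" "B' \<in> P" "u \<in> B" "u \<in> B'"
  shows "B = B'"
  using assms unfolding partition_on_def disjoint_def by blast

lemma finite_partition_block:
  assumes "finite S" "partition_on S P" "B \<in> P"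
  shows "finite B"
  using assms partition_onD1 by (metis Union_upper finite_subset)

lemma ArcE:
  assumes "(i, j) \<in> Arc P"
  obtains B where "B \<in> P" "i \<in> B" "j \<in> B" "i < j" "\<forall>k\<in>B. i < k \<longrightarrow> j \<le> k"
  using assms unfolding Arc_def by blast

lemma arc_system_Arc:
  assumes P: "partition_on S P"
  shows "arc_system S (Arc P)"
proof -
  have "i \<in> S \<and> j \<in> S \<and> i < j" if "(i, j) \<in> Arc P" for i j
    using that partition_onD1[OF P] by (elim ArcE) blast
  moreover have "j = j'" if "(i, j) \<in> Arc P" "(i, j') \<in> Arc P" for i j j'
    using that partition_on_block_eq[OF P] by (elim ArcE) (metis order.antisym)
  moreover have "i = i'" if "(i, j) \<in> Arc P" "(i', j) \<in> Arc P" for i i' j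
    using that partition_on_block_eq[OF P] by (elim ArcE) (metis linorder_neqE not_le)
  ultimately show ?thesis unfolding arc_system_def by blast
qed

lemma block_arcs_Min:
  assumes "finite B" "u \<in> B" "v \<in> B" "u < v"
  shows "(u, Min {b\<in>B. u < b}) \<in> block_arcs B" and "Min {b\<in>B. u < b} \<le> v"
proof -
  have fin: "finite {b\<in>B. u < b}" and ne: "{b\<in>B. u < b} \<noteq> {}"
    using assms by auto
  show "(u, Min {b\<in>B. u < b}) \<in> block_arcs B"
    using Min_in[OF fin ne] Min_le[OF fin] \<open>u \<in> B\<close> unfolding block_arcs_def by auto
  show "Min {b\<in>B. u < b} \<le> v"
    using Min_le[OF fin] assms by auto
qed

lemma block_arcs_Max:
  assumes "finite B" "u \<in> B" "v \<in> B" "v < u"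
  shows "(Max {b\<in>B. b < u}, u) \<in> block_arcs B"
proof -
  have fin: "finite {b\<in>B. b < u}" and ne: "{b\<in>B. b < u} \<noteq> {}"
    using assms by auto
  show ?thesis
    using Max_in[OF fin ne] Max_ge[OF fin] \<open>u \<in> B\<close> unfolding block_arcs_def
    by (auto simp: not_less[symmetric])
qed

lemma rtrancl_Arc_if_same_block:
  assumes fin: "finite B" and BP: "B \<in> P"
  shows "u \<in> B \<Longrightarrow> v \<in> B \<Longrightarrow> u \<le> v \<Longrightarrow> (u, v) \<in> (Arc P)\<^sup>*"
proof (induction "nat (v - u)" arbitrary: u rule: less_induct)
  case less
  show ?case
  proof (cases "u = v")
    case False
    then have uv: "u < v" using less.prems by simp
    define m where "m = Min {b\<in>B. u < b}"
    have m: "(u, m) \<in> block_arcs B" "m \<le> v"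
      using block_arcs_Min[OF fin less.prems(1,2) uv] unfolding m_def by auto
    then have "m \<in> B" "u < m" unfolding block_arcs_def by auto
    then have "(m, v) \<in> (Arc P)\<^sup>*"
      using less.hyps[of m] m(2) less.prems by auto
    moreover have "(u, m) \<in> Arc P" using m(1) BP unfolding Arc_eq_UN_block_arcs by blast
    ultimately show ?thesis by (metis converse_rtrancl_into_rtrancl)
  qed simp
qed

lemma block_eq_Arc_class:
  assumes fin: "finite S" and P: "partition_on S P" and BP: "B \<in> P" and x: "x \<in> B"
  shows "B = {y. (x, y) \<in> (Arc P \<union> (Arc P)\<inverse>)\<^sup>*}"
proof (intro equalityI subsetI; clarify)
  have finB: "finite B" by (rule finite_partition_block[OF fin P BP])
  fix y assume y: "y \<in> B"
  have "(x, y) \<in> (Arc P)\<^sup>* \<or> (y, x) \<in> (Arc P)\<^sup>*"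
    using rtrancl_Arc_if_same_block[OF finB BP] x y by (meson linear)
  then show "(x, y) \<in> (Arc P \<union> (Arc P)\<inverse>)\<^sup>*"
    by (metis in_rtrancl_UnI rtrancl_converseI)
next
  fix y assume "(x, y) \<in> (Arc P \<union> (Arc P)\<inverse>)\<^sup>*"
  then show "y \<in> B"
  proof (induction rule: rtrancl_induct)
    case (step y z)
    then obtain B' where "B' \<in> P" "y \<in> B'" "z \<in> B'" by (auto elim!: ArcE)
    then show ?case
      using partition_on_block_eq[OF P BP] step.IH by blast
  qed (rule x)
qed

lemma inj_on_Arc:
  assumes fin: "finite S"
  shows "inj_on Arc {P. partition_on S P}"
proof -
  have "P \<subseteq> Q" if P: "partition_on S P" and Q: "partition_on S Q" and eq: "Arc P = Arc Q" for P Q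
  proof
    fix B assume BP: "B \<in> P"
    then obtain x where x: "x \<in> B" using partition_onD3[OF P] by (metis equals0I)
    then obtain C where C: "C \<in> Q" "x \<in> C"
      using BP partition_onD1[OF P] partition_onD1[OF Q] by blast
    have "B = C" using block_eq_Arc_class[OF fin P BP x] block_eq_Arc_class[OF fin Q C] eq by simp
    then show "B \<in> Q" using C by simp
  qed
  then show ?thesis by (intro inj_onI) (simp add: subset_antisym)
qed

lemma block_arcs_Un:
  assumes "i \<in> Bi" "j \<in> Bj" "\<forall>k\<in>Bi. k \<le> i" "\<forall>k\<in>Bj. j \<le> k" "i < j"
  shows "block_arcs (Bi \<union> Bj) = insert (i, j) (block_arcs Bi \<union> block_arcs Bj)"
proof (intro equalityI subsetI)
  fix a assume "a \<in> block_arcs (Bi \<union> Bj)"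
  then obtain u v where uv: "a = (u, v)" "(u, v) \<in> block_arcs (Bi \<union> Bj)" by (metis surj_pair)
  then have "u \<in> Bi \<union> Bj" "v \<in> Bi \<union> Bj" "u < v" and least: "\<forall>k\<in>Bi \<union> Bj. u < k \<longrightarrow> v \<le> k"
    unfolding block_arcs_def by auto
  show "a \<in> insert (i, j) (block_arcs Bi \<union> block_arcs Bj)"
  proof (cases "(u, v) \<in> block_arcs Bi \<union> block_arcs Bj")
    case False
    then have "\<not> (u \<in> Bi \<and> v \<in> Bi)" "\<not> (u \<in> Bj \<and> v \<in> Bj)"
      using uv unfolding block_arcs_def by auto
    moreover have "\<not> (u \<in> Bj \<and> v \<in> Bi)"
      using assms \<open>u < v\<close> by force
    ultimately have "u \<in> Bi" "v \<in> Bj" using \<open>u \<in> Bi \<union> Bj\<close> \<open>v \<in> Bi \<union> Bj\<close> by auto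
    then have "u = i \<and> v = j"
      using assms least by (metis UnI1 UnI2 leD le_less order.trans)
    then show ?thesis using uv by simp
  qed (use uv in simp)
next
  fix a assume "a \<in> insert (i, j) (block_arcs Bi \<union> block_arcs Bj)"
  then show "a \<in> block_arcs (Bi \<union> Bj)"
    using assms unfolding block_arcs_def by fastforce
qed

lemma Arc_merge_blocks:
  assumes fin: "finite S" and P: "partition_on S P"
    and sys: "arc_system S (insert (i, j) (Arc P))" and new: "(i, j) \<notin> Arc P"
  obtains P' where "partition_on S P'" "Arc P' = insert (i, j) (Arc P)"
proof -
  have ij: "i \<in> S" "j \<in> S" "i < j" using sys unfolding arc_system_def by auto
  have no_out: "(i, j') \<notin> Arc P" and no_in: "(i', j) \<notin> Arc P" for i' j'
    using sys new unfolding arc_system_def by blast+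
  obtain Bi Bj where Bi: "Bi \<in> P" "i \<in> Bi" and Bj: "Bj \<in> P" "j \<in> Bj"
    using ij partition_onD1[OF P] by blast
  note finBi = finite_partition_block[OF fin P Bi(1)]
  note finBj = finite_partition_block[OF fin P Bj(1)]
  have Bi_max: "\<forall>k\<in>Bi. k \<le> i"
    using block_arcs_Min(1)[OF finBi Bi(2)] Bi(1) no_out
    unfolding Arc_eq_UN_block_arcs by (meson UN_I not_le)
  have Bj_min: "\<forall>k\<in>Bj. j \<le> k"
    using block_arcs_Max[OF finBj Bj(2)] Bj(1) no_in
    unfolding Arc_eq_UN_block_arcs by (meson UN_I not_le)
  have "Bi \<noteq> Bj" using Bi_max Bj(2) ij(3) by force
  define P' where "P' = insert (Bi \<union> Bj) (P - {Bi, Bj})"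
  have "partition_on S P'"
    using P Bi(1) Bj(1) \<open>Bi \<noteq> Bj\<close> unfolding P'_def partition_on_def disjoint_def
    by (auto; blast)
  moreover have "Arc P' = insert (i, j) (Arc P)"
  proof -
    have "Arc P' = block_arcs (Bi \<union> Bj) \<union> (\<Union>B\<in>P - {Bi, Bj}. block_arcs B)"
      unfolding P'_def Arc_eq_UN_block_arcs by simp
    also have "\<dots> = insert (i, j) (block_arcs Bi \<union> block_arcs Bj \<union> (\<Union>B\<in>P - {Bi, Bj}. block_arcs B))"
      using block_arcs_Un[OF Bi(2) Bj(2) Bi_max Bj_min ij(3)] by auto
    also have "block_arcs Bi \<union> block_arcs Bj \<union> (\<Union>B\<in>P - {Bi, Bj}. block_arcs B) = Arc P"
      unfolding Arc_eq_UN_block_arcs using Bi(1) Bj(1) by blast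
    finally show ?thesis .
  qed
  ultimately show ?thesis by (rule that)
qed

lemma arc_system_imp_Arc:
  assumes fin: "finite S" and A: "arc_system S A"
  shows "\<exists>P. partition_on S P \<and> Arc P = A"
  using finite_arc_system[OF fin A] A
proof (induction A rule: finite_induct)
  case empty
  have "Arc ((\<lambda>x. {x}) ` S) = {}"
    unfolding Arc_eq_UN_block_arcs block_arcs_def by auto
  then show ?case using partition_on_singletons by blast
next
  case (insert a F)
  obtain i j where a: "a = (i, j)" by (cases a)
  obtain P where P: "partition_on S P" "Arc P = F"
    using insert.IH arc_system_subset[OF insert.prems] by blast
  show ?case
    using Arc_merge_blocks[OF fin P(1)] insert.prems insert.hyps(2) unfolding P(2) a by metis
qed

lemma bij_betw_Arc:
  assumes "finite S"
  shows "bij_betw Arc {P. partition_on S P \<and> \<Phi> (Arc P)} {A. arc_system S A \<and> \<Phi> A}"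
proof (rule bij_betw_imageI)
  show "inj_on Arc {P. partition_on S P \<and> \<Phi> (Arc P)}"
    using inj_on_Arc[OF assms] by (rule inj_on_subset) blast
  show "Arc ` {P. partition_on S P \<and> \<Phi> (Arc P)} = {A. arc_system S A \<and> \<Phi> A}"
    using arc_system_Arc arc_system_imp_Arc[OF assms] by blast
qed

section \<open>Noncrossing partitions\<close>

lemma sum_split_by_arc_into:
  fixes w :: "('i \<times> 'j) set \<Rightarrow> 'a::comm_monoid_add"
  assumes fin: "finite X" "finite K"
    and K: "\<And>A i. A \<in> X \<Longrightarrow> (i, N) \<in> A \<Longrightarrow> i \<in> K"
    and uniq: "\<And>A i i'. A \<in> X \<Longrightarrow> (i, N) \<in> A \<Longrightarrow> (i', N) \<in> A \<Longrightarrow> i = i'"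
  shows "(\<Sum>A\<in>X. w A)
           = (\<Sum>A | A \<in> X \<and> (\<forall>i. (i, N) \<notin> A). w A) + (\<Sum>i\<in>K. \<Sum>A | A \<in> X \<and> (i, N) \<in> A. w A)"
proof -
  define X0 where "X0 = {A \<in> X. \<forall>i. (i, N) \<notin> A}"
  define Z where "Z i = {A \<in> X. (i, N) \<in> A}" for i
  have "X = X0 \<union> (\<Union>i\<in>K. Z i)"
    unfolding X0_def Z_def using K by auto
  moreover have "X0 \<inter> (\<Union>i\<in>K. Z i) = {}"
    unfolding X0_def Z_def by auto
  ultimately have "(\<Sum>A\<in>X. w A) = (\<Sum>A\<in>X0. w A) + (\<Sum>A\<in>(\<Union>i\<in>K. Z i). w A)"
    using fin(1) by (metis finite_Un sum.union_disjoint)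
  also have "(\<Sum>A\<in>(\<Union>i\<in>K. Z i). w A) = (\<Sum>i\<in>K. \<Sum>A\<in>Z i. w A)"
  proof (rule sum.UNION_disjoint)
    show "\<forall>i\<in>K. finite (Z i)" unfolding Z_def using fin(1) by simp
    show "\<forall>i\<in>K. \<forall>j\<in>K. i \<noteq> j \<longrightarrow> Z i \<inter> Z j = {}" unfolding Z_def using uniq by blast
  qed (rule fin(2))
  finally show ?thesis unfolding X0_def Z_def by simp
qed

lemma sum_bij_betw_Times:
  fixes w :: "'c \<Rightarrow> 'a::comm_semiring_1"
  assumes bij: "bij_betw g (Y1 \<times> Y2) Z"
    and w: "\<And>R I. R \<in> Y1 \<Longrightarrow> I \<in> Y2 \<Longrightarrow> w (g (R, I)) = c * u R * v I"
  shows "(\<Sum>A\<in>Z. w A) = c * (\<Sum>R\<in>Y1. u R) * (\<Sum>I\<in>Y2. v I)"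
proof -
  have "(\<Sum>A\<in>Z. w A) = (\<Sum>RI\<in>Y1 \<times> Y2. w (g RI))"
    by (rule sum.reindex_bij_betw[OF bij, symmetric])
  also have "\<dots> = (\<Sum>(R, I)\<in>Y1 \<times> Y2. c * u R * v I)"
    by (rule sum.cong) (auto simp: w)
  also have "\<dots> = (\<Sum>R\<in>Y1. \<Sum>I\<in>Y2. c * u R * v I)"
    by (simp add: sum.cartesian_product)
  also have "\<dots> = c * ((\<Sum>R\<in>Y1. u R) * (\<Sum>I\<in>Y2. v I))"
    unfolding sum_product by (simp add: sum_distrib_left mult.assoc)
  finally show ?thesis by (simp add: mult.assoc)
qed

definition noncrossing_arcs :: "(int \<times> int) set \<Rightarrow> bool" where
  "noncrossing_arcs A \<longleftrightarrow> \<not> (\<exists>i j k l. (i, k) \<in> A \<and> (j, l) \<in> A \<and> i < j \<and> j < k \<and> k < l)"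

definition nc_arcs :: "int \<Rightarrow> int \<Rightarrow> (int \<times> int) set set" where
  "nc_arcs a b = {A. arc_system {a..b} A \<and> noncrossing_arcs A}"

definition arc_weight :: "'a \<Rightarrow> 'a \<Rightarrow> int \<times> int \<Rightarrow> 'a::comm_ring_1" where
  "arc_weight x y e = (if snd e = fst e + 1 then y else x)"

definition arcs_weight :: "'a \<Rightarrow> 'a \<Rightarrow> (int \<times> int) set \<Rightarrow> 'a::comm_ring_1" where
  "arcs_weight x y A = (\<Prod>e\<in>A. arc_weight x y e)"

lemma nc_arcs_iff:
  "A \<in> nc_arcs a b \<longleftrightarrow>
     (\<forall>i j. (i, j) \<in> A \<longrightarrow> a \<le> i \<and> i \<le> b \<and> a \<le> j \<and> j \<le> b \<and> i < j) \<and>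
     (\<forall>i j j'. (i, j) \<in> A \<longrightarrow> (i, j') \<in> A \<longrightarrow> j = j') \<and>
     (\<forall>i i' j. (i, j) \<in> A \<longrightarrow> (i', j) \<in> A \<longrightarrow> i = i') \<and>
     (\<forall>i j k l. (i, k) \<in> A \<longrightarrow> (j, l) \<in> A \<longrightarrow> i < j \<longrightarrow> j < k \<longrightarrow> k < l \<longrightarrow> False)"
  unfolding nc_arcs_def arc_system_def noncrossing_arcs_def atLeastAtMost_iff by blast

lemma nc_arcsD:
  assumes "A \<in> nc_arcs a b"
  shows "\<And>i j. (i, j) \<in> A \<Longrightarrow> a \<le> i \<and> i \<le> b \<and> a \<le> j \<and> j \<le> b \<and> i < j"
    "\<And>i j j'. (i, j) \<in> A \<Longrightarrow> (i, j') \<in> A \<Longrightarrow> j = j'"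
    "\<And>i i' j. (i, j) \<in> A \<Longrightarrow> (i', j) \<in> A \<Longrightarrow> i = i'"
    "\<And>i j k l. (i, k) \<in> A \<Longrightarrow> (j, l) \<in> A \<Longrightarrow> i < j \<Longrightarrow> j < k \<Longrightarrow> k < l \<Longrightarrow> False"
  using assms unfolding nc_arcs_iff by blast+

lemma finite_nc_arcs: "finite (nc_arcs a b)"
proof (rule finite_subset)
  show "nc_arcs a b \<subseteq> Pow ({a..b} \<times> {a..b})" unfolding nc_arcs_def arc_system_def by auto
qed simp

lemma finite_mem_nc_arcs: "A \<in> nc_arcs a b \<Longrightarrow> finite A"
  unfolding nc_arcs_def using finite_arc_system by blast

lemma nc_arcs_restrict: "A \<in> nc_arcs a b \<Longrightarrow> A \<inter> ({c..d} \<times> {c..d}) \<in> nc_arcs c d"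
  unfolding nc_arcs_iff by auto

lemma nc_arcs_empty:
  assumes "b \<le> a"
  shows "nc_arcs a b = {{}}"
proof -
  have "A = {}" if "A \<in> nc_arcs a b" for A
    using nc_arcsD(1)[OF that] assms by fastforce
  moreover have "{} \<in> nc_arcs a b" by (simp add: nc_arcs_iff)
  ultimately show ?thesis by blast
qed

lemma arcs_weight_eq_power_card:
  assumes "finite A"
  shows "arcs_weight x y A = x ^ card {e\<in>A. snd e \<noteq> fst e + 1} * y ^ card {e\<in>A. snd e = fst e + 1}"
proof -
  have "arcs_weight x y A
      = (\<Prod>e\<in>A \<inter> {e. snd e = fst e + 1}. y) * (\<Prod>e\<in>A \<inter> - {e. snd e = fst e + 1}. x)"
    unfolding arcs_weight_def arc_weight_def by (rule prod.If_cases[OF assms])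
  then show ?thesis
    by (simp add: Int_def Collect_conj_eq[symmetric] Compl_eq mult.commute)
qed

lemma arcs_weight_insert_Un:
  assumes "finite R" "finite I" "R \<inter> I = {}" "e \<notin> R \<union> I"
  shows "arcs_weight x y (insert e (R \<union> I))
           = arc_weight x y e * arcs_weight x y R * arcs_weight x y I"
  using assms unfolding arcs_weight_def by (simp add: prod.union_disjoint mult.assoc)

lemma Cat_eq_sum_nc_arcs: "Cat n x y = (\<Sum>A\<in>nc_arcs 1 (int n). arcs_weight x y A)"
proof -
  have bij: "bij_betw Arc (NC n) (nc_arcs 1 (int n))"
    unfolding NC_def nc_arcs_def noncrossing_def noncrossing_arcs_def[symmetric]
    by (rule bij_betw_Arc) simp
  have "Cat n x y = (\<Sum>P\<in>NC n. arcs_weight x y (Arc P))"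
    unfolding Cat_def
  proof (rule sum.cong[OF refl])
    fix P assume "P \<in> NC n"
    then have "finite (Arc P)" using bij_betwE[OF bij] finite_mem_nc_arcs by blast
    moreover have "Arc P - Cov P = {e\<in>Arc P. snd e \<noteq> fst e + 1}"
      and "Cov P = {e\<in>Arc P. snd e = fst e + 1}"
      unfolding Cov_def by auto
    ultimately show "x ^ card (Arc P - Cov P) * y ^ card (Cov P) = arcs_weight x y (Arc P)"
      by (simp add: arcs_weight_eq_power_card)
  qed
  also have "\<dots> = (\<Sum>A\<in>nc_arcs 1 (int n). arcs_weight x y A)"
    by (rule sum.reindex_bij_betw[OF bij])
  finally show ?thesis .
qed

definition shift_arcs :: "int \<Rightarrow> (int \<times> int) set \<Rightarrow> (int \<times> int) set" where
  "shift_arcs c A = (\<lambda>(i, j). (i + c, j + c)) ` A"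

lemma mem_shift_arcs: "(u, v) \<in> shift_arcs c A \<longleftrightarrow> (u - c, v - c) \<in> A"
  unfolding shift_arcs_def by force

lemma shift_arcs_shift_arcs: "shift_arcs (-c) (shift_arcs c A) = A"
  unfolding shift_arcs_def by (auto simp: image_iff) force

lemma shift_arcs_mem_nc_arcs:
  assumes "A \<in> nc_arcs a b"
  shows "shift_arcs c A \<in> nc_arcs (a + c) (b + c)"
proof -
  note A = nc_arcsD[OF assms]
  have "a + c \<le> i \<and> i \<le> b + c \<and> a + c \<le> j \<and> j \<le> b + c \<and> i < j" if "(i, j) \<in> shift_arcs c A" for i j
    using A(1) that unfolding mem_shift_arcs by fastforce
  moreover have "j = j'" if "(i, j) \<in> shift_arcs c A" "(i, j') \<in> shift_arcs c A" for i j j'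
    using A(2) that unfolding mem_shift_arcs by fastforce
  moreover have "i = i'" if "(i, j) \<in> shift_arcs c A" "(i', j) \<in> shift_arcs c A" for i i' j
    using A(3) that unfolding mem_shift_arcs by fastforce
  moreover have False
    if "(i, k) \<in> shift_arcs c A" "(j, l) \<in> shift_arcs c A" "i < j" "j < k" "k < l" for i j k l
    using A(4)[of "i - c" "k - c" "j - c" "l - c"] that unfolding mem_shift_arcs by simp
  ultimately show ?thesis unfolding nc_arcs_iff by blast
qed

lemma arcs_weight_shift_arcs: "arcs_weight x y (shift_arcs c A) = arcs_weight x y A"
proof -
  have "inj_on (\<lambda>(i, j). (i + c, j + c)) A" by (auto intro: inj_onI)
  then show ?thesis unfolding arcs_weight_def shift_arcs_def
    by (subst prod.reindex) (auto simp: arc_weight_def intro: prod.cong)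
qed

lemma sum_nc_arcs_eq_Cat:
  assumes "a \<le> b + 1"
  shows "(\<Sum>A\<in>nc_arcs a b. arcs_weight x y A) = Cat (nat (b - a + 1)) x y"
proof -
  define c where "c = a - 1"
  have bij: "bij_betw (shift_arcs c) (nc_arcs 1 (b - c)) (nc_arcs a b)"
  proof (rule bij_betw_byWitness[where f' = "shift_arcs (-c)"])
    show "shift_arcs c ` nc_arcs 1 (b - c) \<subseteq> nc_arcs a b"
      using shift_arcs_mem_nc_arcs[of _ 1 "b - c" c] unfolding c_def by auto
    show "shift_arcs (-c) ` nc_arcs a b \<subseteq> nc_arcs 1 (b - c)"
      using shift_arcs_mem_nc_arcs[of _ a b "-c"] unfolding c_def by (auto simp: algebra_simps)
  qed (use shift_arcs_shift_arcs[of c] shift_arcs_shift_arcs[of "-c"] in auto)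
  have "(\<Sum>A\<in>nc_arcs a b. arcs_weight x y A) = (\<Sum>A\<in>nc_arcs 1 (b - c). arcs_weight x y A)"
    using sum.reindex_bij_betw[OF bij, of "arcs_weight x y"] by (simp add: arcs_weight_shift_arcs)
  also have "\<dots> = Cat (nat (b - a + 1)) x y"
    using assms by (simp add: Cat_eq_sum_nc_arcs c_def algebra_simps)
  finally show ?thesis .
qed

lemma nc_arcs_no_arc_into_last: "{A \<in> nc_arcs a b. \<forall>i. (i, b) \<notin> A} = nc_arcs a (b - 1)"
proof (intro equalityI subsetI)
  fix A assume "A \<in> {A \<in> nc_arcs a b. \<forall>i. (i, b) \<notin> A}"
  then have A: "A \<in> nc_arcs a b" and no_arc: "\<forall>i. (i, b) \<notin> A" by auto
  have "a \<le> i \<and> i \<le> b - 1 \<and> a \<le> j \<and> j \<le> b - 1 \<and> i < j" if "(i, j) \<in> A" for i j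
    using nc_arcsD(1)[OF A that] no_arc that by (cases "j = b") auto
  then show "A \<in> nc_arcs a (b - 1)"
    using nc_arcsD(2-4)[OF A] unfolding nc_arcs_iff by blast
next
  fix A assume A: "A \<in> nc_arcs a (b - 1)"
  have "a \<le> i \<and> i \<le> b \<and> a \<le> j \<and> j \<le> b \<and> i < j" if "(i, j) \<in> A" for i j
    using nc_arcsD(1)[OF A that] by auto
  moreover have "(i, b) \<notin> A" for i
    using nc_arcsD(1)[OF A] by fastforce
  ultimately show "A \<in> {A \<in> nc_arcs a b. \<forall>i. (i, b) \<notin> A}"
    using nc_arcsD(2-4)[OF A] unfolding nc_arcs_iff by blast
qed

lemma nc_arcs_with_arc_decompose:
  assumes A: "A \<in> nc_arcs a N" and mN: "(m, N) \<in> A"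
  shows "A = insert (m, N) (A \<inter> ({a..m} \<times> {a..m}) \<union> A \<inter> ({m+1..N-1} \<times> {m+1..N-1}))"
proof -
  note D = nc_arcsD[OF A]
  have "(i, j) = (m, N) \<or> (i, j) \<in> {a..m} \<times> {a..m} \<or> (i, j) \<in> {m+1..N-1} \<times> {m+1..N-1}"
    if ij: "(i, j) \<in> A" for i j
  proof (cases "j = N")
    case True
    then show ?thesis using D(3)[OF ij] mN by simp
  next
    case False
    have "a \<le> i" "j \<le> N" "i < j" using D(1)[OF ij] by auto
    moreover have "i \<noteq> m" using D(2)[OF ij] mN False by auto
    moreover have "\<not> (i < m \<and> m < j)" using D(4)[OF ij mN] False \<open>j \<le> N\<close> by force
    ultimately show ?thesis using False by auto
  qed
  then have "A \<subseteq> insert (m, N) (A \<inter> ({a..m} \<times> {a..m}) \<union> A \<inter> ({m+1..N-1} \<times> {m+1..N-1}))"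
    by (auto simp del: atLeastAtMost_iff mem_Times_iff)
  then show ?thesis using mN by blast
qed

lemma insert_arc_Un_mem_nc_arcs:
  assumes R: "R \<in> nc_arcs a m" and I: "I \<in> nc_arcs (m+1) (N-1)" and "a \<le> m" "m < N"
  shows "insert (m, N) (R \<union> I) \<in> nc_arcs a N"
proof -
  note R = nc_arcsD[OF R] and I = nc_arcsD[OF I]
  show ?thesis
    unfolding nc_arcs_iff
    apply (intro conjI allI impI; elim insertE UnE)
    using assms(3,4) apply (auto dest: R(2-4) I(2-4))
    apply (auto dest!: R(1) I(1))
    done
qed

lemma bij_betw_nc_arcs_with_arc:
  assumes "a \<le> m" "m < N"
  shows "bij_betw (\<lambda>(R, I). insert (m, N) (R \<union> I))
           (nc_arcs a m \<times> nc_arcs (m+1) (N-1)) {A \<in> nc_arcs a N. (m, N) \<in> A}"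
proof -
  define X Y where "X = {a..m} \<times> {a..m}" and "Y = {m+1..N-1} \<times> {m+1..N-1}"
  have inv: "(insert (m, N) (R \<union> I) \<inter> X, insert (m, N) (R \<union> I) \<inter> Y) = (R, I)"
    if R: "R \<in> nc_arcs a m" and I: "I \<in> nc_arcs (m+1) (N-1)" for R I
  proof -
    have "R \<subseteq> X" "R \<inter> Y = {}"
      unfolding X_def Y_def by (auto dest!: nc_arcsD(1)[OF R])
    moreover have "I \<subseteq> Y" "I \<inter> X = {}"
      unfolding X_def Y_def by (auto dest!: nc_arcsD(1)[OF I])
    ultimately show ?thesis
      using assms unfolding X_def Y_def by auto
  qed
  show ?thesis
  proof (rule bij_betw_byWitness[where f' = "\<lambda>A. (A \<inter> X, A \<inter> Y)"])
    show "\<forall>A\<in>{A \<in> nc_arcs a N. (m, N) \<in> A}. (\<lambda>(R, I). insert (m, N) (R \<union> I)) (A \<inter> X, A \<inter> Y) = A"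
      using nc_arcs_with_arc_decompose unfolding X_def Y_def by auto
    show "(\<lambda>(R, I). insert (m, N) (R \<union> I)) ` (nc_arcs a m \<times> nc_arcs (m+1) (N-1))
        \<subseteq> {A \<in> nc_arcs a N. (m, N) \<in> A}"
      using insert_arc_Un_mem_nc_arcs[OF _ _ assms] by auto
    show "(\<lambda>A. (A \<inter> X, A \<inter> Y)) ` {A \<in> nc_arcs a N. (m, N) \<in> A} \<subseteq> nc_arcs a m \<times> nc_arcs (m+1) (N-1)"
      using nc_arcs_restrict unfolding X_def Y_def by auto
  qed (use inv in auto)
qed

lemma sum_nc_arcs_with_arc:
  assumes "a \<le> m" "m < N"
  shows "(\<Sum>A | A \<in> nc_arcs a N \<and> (m, N) \<in> A. arcs_weight x y A)
           = arc_weight x y (m, N) * Cat (nat (m - a + 1)) x y * Cat (nat (N - m - 1)) x y"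
proof -
  have "(\<Sum>A | A \<in> nc_arcs a N \<and> (m, N) \<in> A. arcs_weight x y A)
      = arc_weight x y (m, N) * (\<Sum>R\<in>nc_arcs a m. arcs_weight x y R)
          * (\<Sum>I\<in>nc_arcs (m+1) (N-1). arcs_weight x y I)"
  proof (rule sum_bij_betw_Times[OF bij_betw_nc_arcs_with_arc[OF assms]])
    fix R I assume R: "R \<in> nc_arcs a m" and I: "I \<in> nc_arcs (m+1) (N-1)"
    have "R \<inter> I = {}" "(m, N) \<notin> R \<union> I"
      using assms by (auto dest!: nc_arcsD(1)[OF R] nc_arcsD(1)[OF I])
    then show "arcs_weight x y ((\<lambda>(R, I). insert (m, N) (R \<union> I)) (R, I))
        = arc_weight x y (m, N) * arcs_weight x y R * arcs_weight x y I"
      using arcs_weight_insert_Un finite_mem_nc_arcs[OF R] finite_mem_nc_arcs[OF I] by simp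
  qed
  also have "\<dots> = arc_weight x y (m, N) * Cat (nat (m - a + 1)) x y * Cat (nat (N - m - 1)) x y"
    using assms by (simp add: sum_nc_arcs_eq_Cat)
  finally show ?thesis .
qed

lemma Cat_0: "Cat 0 x y = 1"
  by (simp add: Cat_eq_sum_nc_arcs nc_arcs_empty arcs_weight_def)

lemma Cat_convolution:
  assumes n: "n \<ge> 1"
  shows "Cat n x y
           = Cat (n-1) x y + (\<Sum>m=1..n-1. arc_weight x y (int m, int n) * Cat m x y * Cat (n-1-m) x y)"
proof -
  let ?X = "nc_arcs 1 (int n)" and ?w = "arcs_weight x y"
  have "Cat n x y = (\<Sum>A | A \<in> ?X \<and> (\<forall>i. (i, int n) \<notin> A). ?w A)
      + (\<Sum>i\<in>{1..int n - 1}. \<Sum>A | A \<in> ?X \<and> (i, int n) \<in> A. ?w A)"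
    unfolding Cat_eq_sum_nc_arcs
    by (rule sum_split_by_arc_into) (auto simp: finite_nc_arcs dest: nc_arcsD(1,3))
  also have "(\<Sum>A | A \<in> ?X \<and> (\<forall>i. (i, int n) \<notin> A). ?w A) = Cat (n-1) x y"
    using nc_arcs_no_arc_into_last[of 1 "int n"] n
    by (simp add: sum_nc_arcs_eq_Cat nat_diff_distrib)
  also have "(\<Sum>i\<in>{1..int n - 1}. \<Sum>A | A \<in> ?X \<and> (i, int n) \<in> A. ?w A)
      = (\<Sum>m=1..n-1. \<Sum>A | A \<in> ?X \<and> (int m, int n) \<in> A. ?w A)"
  proof -
    have "{1..int n - 1} = int ` {1..n-1}"
      using n by (simp add: image_int_atLeastAtMost of_nat_diff)
    then show ?thesis by (simp add: sum.reindex)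
  qed
  also have "\<dots> = (\<Sum>m=1..n-1. arc_weight x y (int m, int n) * Cat m x y * Cat (n-1-m) x y)"
    by (intro sum.cong refl, subst sum_nc_arcs_with_arc) (auto simp: nat_diff_distrib)
  finally show ?thesis .
qed

lemma Cat_1: "Cat 1 x y = 1"
  using Cat_convolution[of 1] by (simp add: Cat_0)

lemma Cat_recurrence:
  assumes n: "n \<ge> 2"
  shows "Cat n x y = (1+y) * Cat (n-1) x y + x * (\<Sum>i=1..n-2. Cat i x y * Cat (n-1-i) x y)"
proof -
  let ?f = "\<lambda>m. arc_weight x y (int m, int n) * Cat m x y * Cat (n-1-m) x y"
  have split: "{1..n-1} = insert (n-1) {1..n-2}" using n by auto
  have "Cat n x y = Cat (n-1) x y + (\<Sum>m=1..n-1. ?f m)"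
    using n by (intro Cat_convolution) simp
  also have "(\<Sum>m=1..n-1. ?f m) = ?f (n-1) + (\<Sum>m=1..n-2. ?f m)"
    unfolding split by (subst sum.insert) (use n in auto)
  also have "?f (n-1) = y * Cat (n-1) x y"
    using n by (simp add: arc_weight_def Cat_0 of_nat_diff)
  also have "(\<Sum>m=1..n-2. ?f m) = x * (\<Sum>i=1..n-2. Cat i x y * Cat (n-1-i) x y)"
    unfolding sum_distrib_left by (rule sum.cong) (auto simp: arc_weight_def mult.assoc)
  finally show ?thesis by (simp add: algebra_simps)
qed

section \<open>Type B noncrossing partitions\<close>

definition mirror_arcs :: "(int \<times> int) set \<Rightarrow> (int \<times> int) set" where
  "mirror_arcs A = (\<lambda>(i, j). (-j, -i)) ` A"

lemma mem_mirror_arcs: "(u, v) \<in> mirror_arcs A \<longleftrightarrow> (-v, -u) \<in> A"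
  unfolding mirror_arcs_def by force

lemma block_arcs_uminus: "block_arcs (uminus ` B) = mirror_arcs (block_arcs B)"
proof (rule set_eqI, clarify)
  fix u v :: int
  have "(u, v) \<in> block_arcs (uminus ` B) \<longleftrightarrow> -u \<in> B \<and> -v \<in> B \<and> u < v \<and> (\<forall>k\<in>B. u < -k \<longrightarrow> v \<le> -k)"
    unfolding block_arcs_def by (auto simp: image_iff) (metis minus_minus)+
  also have "\<dots> \<longleftrightarrow> -u \<in> B \<and> -v \<in> B \<and> -v < -u \<and> (\<forall>k\<in>B. -v < k \<longrightarrow> -u \<le> k)"
    by (intro conj_cong ball_cong refl) linarith+
  also have "\<dots> \<longleftrightarrow> (u, v) \<in> mirror_arcs (block_arcs B)"
    unfolding mem_mirror_arcs block_arcs_def by auto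
  finally show "(u, v) \<in> block_arcs (uminus ` B) \<longleftrightarrow> (u, v) \<in> mirror_arcs (block_arcs B)" .
qed

lemma Arc_uminus: "Arc ((`) uminus ` P) = mirror_arcs (Arc P)"
  unfolding Arc_eq_UN_block_arcs by (simp add: block_arcs_uminus mirror_arcs_def image_UN)

lemma partition_on_uminus:
  fixes S :: "int set"
  assumes P: "partition_on S P" and S: "uminus ` S = S"
  shows "partition_on S ((`) uminus ` P)"
proof -
  have "partition_on (uminus ` S) ((`) uminus ` P - {{}})"
    by (rule partition_on_inj_image[OF P]) (simp add: inj_on_def)
  moreover have "(`) uminus ` P - {{}} = (`) uminus ` P" using partition_onD3[OF P] by auto
  ultimately show ?thesis using S by simp
qed

lemma block_arcs_symmetric_block:
  fixes B :: "int set"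
  assumes fin: "finite B" and sym: "uminus ` B = B" and "B \<noteq> {}" "0 \<notin> B"
  shows "\<exists>v. (-v, v) \<in> block_arcs B"
proof -
  have neg: "-b \<in> B" if "b \<in> B" for b
    using sym that by blast
  obtain b where "b \<in> B" using \<open>B \<noteq> {}\<close> by blast
  then have "\<bar>b\<bar> \<in> {b\<in>B. 0 < b}"
    using \<open>0 \<notin> B\<close> neg[of b] by (cases "0 < b"; cases "b = 0") auto
  then have ne: "{b\<in>B. 0 < b} \<noteq> {}" by blast
  define w where "w = Min {b\<in>B. 0 < b}"
  have w: "w \<in> B" "0 < w" and w_min: "\<And>b. b \<in> B \<Longrightarrow> 0 < b \<Longrightarrow> w \<le> b"
    using Min_in[OF _ ne] Min_le[of "{b\<in>B. 0 < b}"] fin unfolding w_def by auto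
  have "w \<le> k" if "k \<in> B" "-w < k" for k
  proof (cases "0 < k")
    case False
    then have "k < 0" using that(1) \<open>0 \<notin> B\<close> by (cases "k = 0") auto
    then show ?thesis using w_min[OF neg[OF that(1)]] that(2) by simp
  qed (use w_min that in auto)
  then have "(-w, w) \<in> block_arcs B"
    unfolding block_arcs_def using w neg[OF w(1)] by auto
  then show ?thesis by blast
qed

lemma uminus_partition_eq:
  fixes S :: "int set"
  assumes fin: "finite S" and P: "partition_on S P" and S: "uminus ` S = S"
    and sym: "\<forall>i j. (i, j) \<in> Arc P \<longleftrightarrow> (-j, -i) \<in> Arc P"
  shows "(`) uminus ` P = P"
proof -
  have "Arc ((`) uminus ` P) = Arc P"
    unfolding Arc_uminus using sym by (auto simp: mem_mirror_arcs)
  then show ?thesis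
    using inj_on_Arc[OF fin] partition_on_uminus[OF P S] P by (auto dest: inj_onD)
qed

lemma no_symmetric_arc_iff_zero_block:
  fixes S :: "int set"
  assumes fin: "finite S" and P: "partition_on S P" and S: "uminus ` S = S"
    and sym: "\<forall>i j. (i, j) \<in> Arc P \<longleftrightarrow> (-j, -i) \<in> Arc P"
  shows "(\<forall>v. (-v, v) \<notin> Arc P) \<longleftrightarrow> (\<forall>B\<in>P. uminus ` B = B \<longrightarrow> 0 \<in> B)"
proof
  assume no_sym: "\<forall>v. (-v, v) \<notin> Arc P"
  show "\<forall>B\<in>P. uminus ` B = B \<longrightarrow> 0 \<in> B"
  proof (intro ballI impI, rule ccontr)
    fix B assume B: "B \<in> P" "uminus ` B = B" "0 \<notin> B"
    moreover have "B \<noteq> {}" using partition_onD3[OF P] B(1) by blast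
    ultimately obtain v where "(-v, v) \<in> block_arcs B"
      using block_arcs_symmetric_block[OF finite_partition_block[OF fin P B(1)]] by blast
    then show False using no_sym B(1) unfolding Arc_eq_UN_block_arcs by blast
  qed
next
  assume zero: "\<forall>B\<in>P. uminus ` B = B \<longrightarrow> 0 \<in> B"
  show "\<forall>v. (-v, v) \<notin> Arc P"
  proof (intro allI notI)
    fix v assume "(-v, v) \<in> Arc P"
    then obtain B where B: "B \<in> P" "-v \<in> B" "v \<in> B" "-v < v" "\<forall>k\<in>B. -v < k \<longrightarrow> v \<le> k"
      by (rule ArcE)
    have "uminus ` B \<in> (`) uminus ` P" using B(1) by (rule imageI)
    then have "uminus ` B \<in> P" unfolding uminus_partition_eq[OF fin P S sym] .
    moreover have "v \<in> uminus ` B" using B(2) by (rule rev_image_eqI) simp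
    ultimately have "uminus ` B = B" using partition_on_block_eq[OF P _ B(1) _ B(3)] by blast
    then have "0 \<in> B" using zero B(1) by blast
    then show False using B(4) B(5)[rule_format, of 0] by linarith
  qed
qed

text \<open>The condition on arcs \<open>(-v, v)\<close> is the arc form of the requirement in \<^const>\<open>PiB\<close> that
  only the zero block be its own mirror image (\<open>no_symmetric_arc_iff_zero_block\<close>).\<close>

definition ncB_arcs :: "int \<Rightarrow> (int \<times> int) set set" where
  "ncB_arcs N = {A. arc_system {-N..N} A \<and> (\<forall>i j. (i, j) \<in> A \<longleftrightarrow> (-j, -i) \<in> A) \<and> (\<forall>v. (-v, v) \<notin> A)
     \<and> (\<forall>i j k l. (i, k) \<in> A \<longrightarrow> (j, l) \<in> A \<longrightarrow> i < j \<longrightarrow> j < k \<longrightarrow> k < l \<longrightarrow> (i, k) = (-l, -j))}"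

lemma ncB_arcs_iff:
  "A \<in> ncB_arcs N \<longleftrightarrow>
     (\<forall>i j. (i, j) \<in> A \<longrightarrow> -N \<le> i \<and> i \<le> N \<and> -N \<le> j \<and> j \<le> N \<and> i < j) \<and>
     (\<forall>i j j'. (i, j) \<in> A \<longrightarrow> (i, j') \<in> A \<longrightarrow> j = j') \<and>
     (\<forall>i i' j. (i, j) \<in> A \<longrightarrow> (i', j) \<in> A \<longrightarrow> i = i') \<and>
     (\<forall>i j. (i, j) \<in> A \<longrightarrow> (-j, -i) \<in> A) \<and>
     (\<forall>v. (-v, v) \<notin> A) \<and>
     (\<forall>i j k l. (i, k) \<in> A \<longrightarrow> (j, l) \<in> A \<longrightarrow> i < j \<longrightarrow> j < k \<longrightarrow> k < l \<longrightarrow> (i, k) = (-l, -j))"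
  unfolding ncB_arcs_def arc_system_def by (auto; metis minus_minus)

lemma ncB_arcsD:
  assumes "A \<in> ncB_arcs N"
  shows "\<And>i j. (i, j) \<in> A \<Longrightarrow> -N \<le> i \<and> i \<le> N \<and> -N \<le> j \<and> j \<le> N \<and> i < j"
    "\<And>i j j'. (i, j) \<in> A \<Longrightarrow> (i, j') \<in> A \<Longrightarrow> j = j'"
    "\<And>i i' j. (i, j) \<in> A \<Longrightarrow> (i', j) \<in> A \<Longrightarrow> i = i'"
    "\<And>i j. (i, j) \<in> A \<Longrightarrow> (-j, -i) \<in> A"
    "\<And>v. (-v, v) \<notin> A"
    "\<And>i j k l. (i, k) \<in> A \<Longrightarrow> (j, l) \<in> A \<Longrightarrow> i < j \<Longrightarrow> j < k \<Longrightarrow> k < l \<Longrightarrow> (i, k) = (-l, -j)"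
  using assms unfolding ncB_arcs_iff by blast+

lemma finite_mem_ncB_arcs: "A \<in> ncB_arcs N \<Longrightarrow> finite A"
  unfolding ncB_arcs_def using finite_arc_system by blast

lemma finite_ncB_arcs: "finite (ncB_arcs N)"
proof (rule finite_subset)
  show "ncB_arcs N \<subseteq> Pow ({-N..N} \<times> {-N..N})" unfolding ncB_arcs_def arc_system_def by auto
qed simp

text \<open>Mirror arcs \<open>(i, j)\<close> and \<open>(-j, -i)\<close> have opposite sums \<open>i + j\<close>, and in \<^const>\<open>ncB_arcs\<close>
  no arc has sum \<open>0\<close>; so the positive arcs contain exactly one arc of each mirror pair.\<close>

definition positive_arcs :: "(int \<times> int) set \<Rightarrow> (int \<times> int) set" where
  "positive_arcs A = {e \<in> A. 0 < fst e + snd e}"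

lemma card_eq_twice_card_positive_arcs:
  assumes fin: "finite A" and mirror: "\<And>i j. (i, j) \<in> A \<Longrightarrow> (-j, -i) \<in> A"
    and no_sym: "\<And>v. (-v, v) \<notin> A" and Q: "\<And>i j. Q (-j, -i) = Q (i, j)"
  shows "card {e\<in>A. Q e} = 2 * card {e\<in>positive_arcs A. Q e}"
proof -
  define H where "H = {e\<in>positive_arcs A. Q e}"
  define G where "G = {e\<in>A. Q e \<and> \<not> 0 < fst e + snd e}"
  have "G = mirror_arcs H"
  proof (rule set_eqI, clarify)
    fix u v
    have "u + v \<noteq> 0" if "(u, v) \<in> A" using no_sym[of v] that by (auto simp: add_eq_0_iff)
    then show "(u, v) \<in> G \<longleftrightarrow> (u, v) \<in> mirror_arcs H"
      unfolding G_def H_def positive_arcs_def mem_mirror_arcs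
      using mirror[of u v] mirror[of "-v" "-u"] Q[where i = u and j = v] by auto
  qed
  moreover have "inj_on (\<lambda>(i, j). (-j, -i :: int)) H" by (auto intro: inj_onI)
  ultimately have "card G = card H" unfolding mirror_arcs_def by (simp add: card_image)
  moreover have "{e\<in>A. Q e} = H \<union> G" "H \<inter> G = {}" "finite H" "finite G"
    using fin unfolding H_def G_def positive_arcs_def by auto
  ultimately have "card {e\<in>A. Q e} = card H + card H" by (simp add: card_Un_disjoint)
  then show ?thesis unfolding H_def by simp
qed

lemma arcs_weight_positive_arcs:
  assumes A: "A \<in> ncB_arcs N"
  shows "arcs_weight x y (positive_arcs A)
           = x ^ (card {e\<in>A. snd e \<noteq> fst e + 1} div 2) * y ^ (card {e\<in>A. snd e = fst e + 1} div 2)"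
proof -
  note half = card_eq_twice_card_positive_arcs[OF finite_mem_ncB_arcs[OF A] ncB_arcsD(4,5)[OF A]]
  have "card {e\<in>A. snd e \<noteq> fst e + 1} = 2 * card {e\<in>positive_arcs A. snd e \<noteq> fst e + 1}"
    by (rule half) auto
  moreover have "card {e\<in>A. snd e = fst e + 1} = 2 * card {e\<in>positive_arcs A. snd e = fst e + 1}"
    by (rule half) auto
  moreover have "finite (positive_arcs A)"
    using finite_mem_ncB_arcs[OF A] unfolding positive_arcs_def by simp
  ultimately show ?thesis by (simp add: arcs_weight_eq_power_card)
qed

lemma CatB_eq_sum_ncB_arcs: "CatB n x y = (\<Sum>A\<in>ncB_arcs (int n). arcs_weight x y (positive_arcs A))"
proof -
  define S where "S = {- int n..int n}"
  have finS: "finite S" and negS: "uminus ` S = S"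
    unfolding S_def by simp_all
  have "P \<in> NCB_tilde n \<longleftrightarrow> partition_on S P \<and> Arc P \<in> ncB_arcs (int n)" for P
  proof (cases "partition_on S P \<and> (\<forall>i j. (i, j) \<in> Arc P \<longleftrightarrow> (-j, -i) \<in> Arc P)")
    case True
    then have "(\<forall>B\<in>P. uminus ` B = B \<longrightarrow> 0 \<in> B) \<longleftrightarrow> (\<forall>v. (-v, v) \<notin> Arc P)"
      using no_symmetric_arc_iff_zero_block[OF finS _ negS] by blast
    then show ?thesis
      using True arc_system_Arc[of S P] unfolding NCB_tilde_def PiB_def ncB_arcs_def S_def by auto
  qed (auto simp: NCB_tilde_def PiB_def ncB_arcs_def S_def)
  then have "NCB_tilde n = {P. partition_on S P \<and> Arc P \<in> ncB_arcs (int n)}"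
    by blast
  then have bij: "bij_betw Arc (NCB_tilde n) (ncB_arcs (int n))"
    using bij_betw_Arc[OF finS, of "\<lambda>A. A \<in> ncB_arcs (int n)"]
    unfolding ncB_arcs_def S_def by simp
  have "CatB n x y = (\<Sum>P\<in>NCB_tilde n. arcs_weight x y (positive_arcs (Arc P)))"
    unfolding CatB_def
  proof (rule sum.cong[OF refl])
    fix P assume "P \<in> NCB_tilde n"
    then have "Arc P \<in> ncB_arcs (int n)" using bij_betwE[OF bij] by blast
    moreover have "Arc P - Cov P = {e\<in>Arc P. snd e \<noteq> fst e + 1}"
      and "Cov P = {e\<in>Arc P. snd e = fst e + 1}"
      unfolding Cov_def by auto
    ultimately show "x ^ (card (Arc P - Cov P) div 2) * y ^ (card (Cov P) div 2)
        = arcs_weight x y (positive_arcs (Arc P))"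
      by (simp add: arcs_weight_positive_arcs)
  qed
  also have "\<dots> = (\<Sum>A\<in>ncB_arcs (int n). arcs_weight x y (positive_arcs A))"
    by (rule sum.reindex_bij_betw[OF bij])
  finally show ?thesis .
qed

lemma mirror_arcs_mem_nc_arcs:
  assumes "I \<in> nc_arcs a b"
  shows "mirror_arcs I \<in> nc_arcs (-b) (-a)"
proof -
  note I = nc_arcsD[OF assms]
  have "-b \<le> i \<and> i \<le> -a \<and> -b \<le> j \<and> j \<le> -a \<and> i < j" if "(i, j) \<in> mirror_arcs I" for i j
    using I(1)[of "-j" "-i"] that unfolding mem_mirror_arcs by auto
  moreover have "j = j'" if "(i, j) \<in> mirror_arcs I" "(i, j') \<in> mirror_arcs I" for i j j'
    using I(3)[of "-j" "-i" "-j'"] that unfolding mem_mirror_arcs by auto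
  moreover have "i = i'" if "(i, j) \<in> mirror_arcs I" "(i', j) \<in> mirror_arcs I" for i i' j
    using I(2)[of "-j" "-i" "-i'"] that unfolding mem_mirror_arcs by auto
  moreover have False
    if "(i, k) \<in> mirror_arcs I" "(j, l) \<in> mirror_arcs I" "i < j" "j < k" "k < l" for i j k l
    using I(4)[of "-l" "-j" "-k" "-i"] that unfolding mem_mirror_arcs by auto
  ultimately show ?thesis unfolding nc_arcs_iff by blast
qed

lemma ncB_arcs_restrict: "A \<in> ncB_arcs N \<Longrightarrow> A \<inter> ({-L..L} \<times> {-L..L}) \<in> ncB_arcs L"
  unfolding ncB_arcs_iff by auto

lemma ncB_arcs_restrict_positive:
  assumes A: "A \<in> ncB_arcs N" and "0 < a"
  shows "A \<inter> ({a..b} \<times> {a..b}) \<in> nc_arcs a b"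
proof -
  note D = ncB_arcsD[OF A]
  have False
    if "(i, k) \<in> A \<inter> ({a..b} \<times> {a..b})" "(j, l) \<in> A \<inter> ({a..b} \<times> {a..b})" "i < j" "j < k" "k < l"
    for i j k l
    using D(6)[of i k j l] that \<open>0 < a\<close> by auto
  then show ?thesis
    unfolding nc_arcs_iff by (auto dest: D(1-3))
qed

lemma ncB_arcs_no_arc_into_last: "{A \<in> ncB_arcs N. \<forall>i. (i, N) \<notin> A} = ncB_arcs (N - 1)"
proof (intro equalityI subsetI)
  fix A assume "A \<in> {A \<in> ncB_arcs N. \<forall>i. (i, N) \<notin> A}"
  then have A: "A \<in> ncB_arcs N" and no_arc: "\<forall>i. (i, N) \<notin> A" by auto
  have "-(N-1) \<le> i \<and> i \<le> N - 1 \<and> -(N-1) \<le> j \<and> j \<le> N - 1 \<and> i < j" if "(i, j) \<in> A" for i j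
  proof -
    have "j \<noteq> N" "i \<noteq> -N" using no_arc that ncB_arcsD(4)[OF A that] by auto
    then show ?thesis using ncB_arcsD(1)[OF A that] by simp
  qed
  then show "A \<in> ncB_arcs (N - 1)"
    using ncB_arcsD(2-6)[OF A] unfolding ncB_arcs_iff by (intro conjI allI impI) simp_all
next
  fix A assume A: "A \<in> ncB_arcs (N - 1)"
  have "-N \<le> i \<and> i \<le> N \<and> -N \<le> j \<and> j \<le> N \<and> i < j" if "(i, j) \<in> A" for i j
    using ncB_arcsD(1)[OF A that] by auto
  moreover have "(i, N) \<notin> A" for i
    using ncB_arcsD(1)[OF A, of i N] by auto
  ultimately show "A \<in> {A \<in> ncB_arcs N. \<forall>i. (i, N) \<notin> A}"
    using ncB_arcsD(2-6)[OF A] unfolding ncB_arcs_iff by (intro CollectI conjI allI impI) simp_all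
qed

lemma ncB_arcs_glue:
  assumes L: "0 \<le> L" "L < N" and s: "s = L \<or> (s = -L-1 \<and> L+1 < N)"
    and R: "R \<in> ncB_arcs L" and I: "I \<in> nc_arcs (L+1) (N-1)"
  shows "R \<union> I \<union> mirror_arcs I \<union> {(s, N), (-N, -s)} \<in> ncB_arcs N"
proof -
  note R = ncB_arcsD[OF R] and I = nc_arcsD[OF I]
  note M = nc_arcsD[OF mirror_arcs_mem_nc_arcs[OF assms(5)]]
  have sN: "-N < s" "s < N" "-N < -s" "-s < N" "s + N > 0" using L s by auto
  let ?G = "R \<union> I \<union> mirror_arcs I \<union> {(s, N), (-N, -s)}"
  have "\<forall>i j. (i, j) \<in> ?G \<longrightarrow> -N \<le> i \<and> i \<le> N \<and> -N \<le> j \<and> j \<le> N \<and> i < j"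
    apply (intro allI impI; elim insertE UnE)
    using L sN by (auto dest!: R(1) I(1) M(1))
  moreover have "\<forall>i j j'. (i, j) \<in> ?G \<longrightarrow> (i, j') \<in> ?G \<longrightarrow> j = j'"
    apply (intro allI impI; elim insertE UnE)
    using L s sN apply (auto dest: R(2) I(2) M(2))
    apply (auto dest!: R(1) I(1) M(1))
    done
  moreover have "\<forall>i i' j. (i, j) \<in> ?G \<longrightarrow> (i', j) \<in> ?G \<longrightarrow> i = i'"
    apply (intro allI impI; elim insertE UnE)
    using L s sN apply (auto dest: R(3) I(3) M(3))
    apply (auto dest!: R(1) I(1) M(1))
    done
  moreover have "\<forall>i j. (i, j) \<in> ?G \<longrightarrow> (-j, -i) \<in> ?G"
    by (intro allI impI; elim insertE UnE) (auto simp: mem_mirror_arcs dest: R(4))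
  moreover have "\<forall>v. (-v, v) \<notin> ?G"
    apply (intro allI notI; elim insertE UnE)
    using L sN R(5) by (auto simp: mem_mirror_arcs dest!: I(1))
  moreover have "\<forall>i j k l. (i, k) \<in> ?G \<longrightarrow> (j, l) \<in> ?G \<longrightarrow> i < j \<longrightarrow> j < k \<longrightarrow> k < l \<longrightarrow> (i, k) = (-l, -j)"
    apply (intro allI impI; elim insertE UnE)
    using L s sN apply (auto dest: R(6) I(4) M(4))
    apply (auto dest!: R(1) I(1) M(1))
    done
  ultimately show ?thesis unfolding ncB_arcs_iff by (intro conjI)
qed

lemma ncB_arcs_with_arc_decompose:
  assumes A: "A \<in> ncB_arcs N" and sA: "(s, N) \<in> A"
    and L: "0 \<le> L" "L < N" and s: "s = L \<or> (s = -L-1 \<and> L+1 < N)"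
  defines "I \<equiv> A \<inter> ({L+1..N-1} \<times> {L+1..N-1})"
  shows "A = A \<inter> ({-L..L} \<times> {-L..L}) \<union> I \<union> mirror_arcs I \<union> {(s, N), (-N, -s)}"
proof -
  note D = ncB_arcsD[OF A]
  have sA': "(-N, -s) \<in> A" using D(4)[OF sA] .
  have cases: "(i, j) = (s, N) \<or> (i, j) = (-N, -s) \<or> (i, j) \<in> {-L..L} \<times> {-L..L}
       \<or> (i, j) \<in> {L+1..N-1} \<times> {L+1..N-1} \<or> (-j, -i) \<in> {L+1..N-1} \<times> {L+1..N-1}"
    if ij: "(i, j) \<in> A" for i j
  proof -
    consider "j = N" | "i = -N" | "i = s" | "j = -s" | "j \<noteq> N" "i \<noteq> -N" "i \<noteq> s" "j \<noteq> -s" by blast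
    then show ?thesis
    proof cases
      case 5
      have r: "-N \<le> i" "j \<le> N" "i < j" using D(1)[OF ij] by auto
      have "\<not> (i < s \<and> s < j)"
        using D(6)[OF ij sA] r 5 by auto
      moreover have "\<not> (i < -s \<and> -s < j)"
        using D(6)[OF sA' ij] r 5 by auto
      ultimately show ?thesis using s r 5 L by auto
    qed (use D(2,3) ij sA sA' in auto)
  qed
  have "A \<subseteq> A \<inter> ({-L..L} \<times> {-L..L}) \<union> I \<union> mirror_arcs I \<union> {(s, N), (-N, -s)}"
  proof
    fix e assume e: "e \<in> A"
    obtain i j where ij: "e = (i, j)" by (cases e)
    then show "e \<in> A \<inter> ({-L..L} \<times> {-L..L}) \<union> I \<union> mirror_arcs I \<union> {(s, N), (-N, -s)}"
      using cases[of i j] e D(4)[of i j] unfolding I_def by (auto simp: mem_mirror_arcs)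
  qed
  moreover have "mirror_arcs I \<subseteq> A"
    unfolding I_def mirror_arcs_def using D(4) by auto
  ultimately show ?thesis using sA sA' unfolding I_def by blast
qed

text \<open>The arc ending at \<open>N\<close> starts at \<open>s = L \<ge> 0\<close> or at \<open>s = -L - 1 < 0\<close>. Either way, the arcs
  inside \<open>[-L, L]\<close> form a type B configuration, those inside \<open>[L+1, N-1]\<close> a type A one, and
  the arcs inside \<open>[1-N, -L-1]\<close> are the mirror images of the latter.\<close>

lemma bij_betw_ncB_arcs_with_arc:
  assumes L: "0 \<le> L" "L < N" and s: "s = L \<or> (s = -L-1 \<and> L+1 < N)"
  shows "bij_betw (\<lambda>(R, I). R \<union> I \<union> mirror_arcs I \<union> {(s, N), (-N, -s)})
           (ncB_arcs L \<times> nc_arcs (L+1) (N-1)) {A \<in> ncB_arcs N. (s, N) \<in> A}"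
proof -
  define X Y where "X = {-L..L} \<times> {-L..L}" and "Y = {L+1..N-1} \<times> {L+1..N-1}"
  have sN: "-N < s" "s < N" "-N < -s" "-s < N" using L s by auto
  have inv: "((R \<union> I \<union> mirror_arcs I \<union> {(s, N), (-N, -s)}) \<inter> X,
              (R \<union> I \<union> mirror_arcs I \<union> {(s, N), (-N, -s)}) \<inter> Y) = (R, I)"
    if R: "R \<in> ncB_arcs L" and I: "I \<in> nc_arcs (L+1) (N-1)" for R I
  proof -
    have "R \<subseteq> X" "R \<inter> Y = {}"
      unfolding X_def Y_def by (auto dest!: ncB_arcsD(1)[OF R])
    moreover have "I \<subseteq> Y" "I \<inter> X = {}" "mirror_arcs I \<inter> X = {}" "mirror_arcs I \<inter> Y = {}"
      unfolding X_def Y_def using L by (auto simp: mem_mirror_arcs dest!: nc_arcsD(1)[OF I])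
    ultimately show ?thesis
      using L sN unfolding X_def Y_def by auto
  qed
  show ?thesis
  proof (rule bij_betw_byWitness[where f' = "\<lambda>A. (A \<inter> X, A \<inter> Y)"])
    show "\<forall>A\<in>{A \<in> ncB_arcs N. (s, N) \<in> A}.
        (\<lambda>(R, I). R \<union> I \<union> mirror_arcs I \<union> {(s, N), (-N, -s)}) (A \<inter> X, A \<inter> Y) = A"
      using ncB_arcs_with_arc_decompose[OF _ _ L s] unfolding X_def Y_def by auto
    show "(\<lambda>(R, I). R \<union> I \<union> mirror_arcs I \<union> {(s, N), (-N, -s)}) ` (ncB_arcs L \<times> nc_arcs (L+1) (N-1))
        \<subseteq> {A \<in> ncB_arcs N. (s, N) \<in> A}"
      using ncB_arcs_glue[OF L s] by auto
    show "(\<lambda>A. (A \<inter> X, A \<inter> Y)) ` {A \<in> ncB_arcs N. (s, N) \<in> A} \<subseteq> ncB_arcs L \<times> nc_arcs (L+1) (N-1)"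
      using ncB_arcs_restrict ncB_arcs_restrict_positive L unfolding X_def Y_def by auto
  qed (use inv in auto)
qed

lemma sum_ncB_arcs_with_arc:
  assumes L: "0 \<le> L" "L < N" and s: "s = L \<or> (s = -L-1 \<and> L+1 < N)"
  shows "(\<Sum>A | A \<in> ncB_arcs N \<and> (s, N) \<in> A. arcs_weight x y (positive_arcs A))
           = arc_weight x y (s, N) * CatB (nat L) x y * Cat (nat (N - L - 1)) x y"
proof -
  have "(\<Sum>A | A \<in> ncB_arcs N \<and> (s, N) \<in> A. arcs_weight x y (positive_arcs A))
      = arc_weight x y (s, N) * (\<Sum>R\<in>ncB_arcs L. arcs_weight x y (positive_arcs R))
          * (\<Sum>I\<in>nc_arcs (L+1) (N-1). arcs_weight x y I)"
  proof (rule sum_bij_betw_Times[OF bij_betw_ncB_arcs_with_arc[OF L s]])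
    fix R I assume R: "R \<in> ncB_arcs L" and I: "I \<in> nc_arcs (L+1) (N-1)"
    have "positive_arcs I = I" "positive_arcs (mirror_arcs I) = {}"
      using L unfolding positive_arcs_def mirror_arcs_def by (auto dest: nc_arcsD(1)[OF I])
    moreover have "positive_arcs {(s, N), (-N, -s)} = {(s, N)}"
      using L s unfolding positive_arcs_def by auto
    ultimately have "positive_arcs (R \<union> I \<union> mirror_arcs I \<union> {(s, N), (-N, -s)})
        = insert (s, N) (positive_arcs R \<union> I)"
      unfolding positive_arcs_def by blast
    moreover have "positive_arcs R \<inter> I = {}" "(s, N) \<notin> positive_arcs R \<union> I"
      using L unfolding positive_arcs_def by (auto dest!: ncB_arcsD(1)[OF R] nc_arcsD(1)[OF I])
    moreover have "finite (positive_arcs R)"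
      using finite_mem_ncB_arcs[OF R] unfolding positive_arcs_def by simp
    ultimately show "arcs_weight x y
        (positive_arcs ((\<lambda>(R, I). R \<union> I \<union> mirror_arcs I \<union> {(s, N), (-N, -s)}) (R, I)))
        = arc_weight x y (s, N) * arcs_weight x y (positive_arcs R) * arcs_weight x y I"
      using arcs_weight_insert_Un finite_mem_nc_arcs[OF I] by simp
  qed
  also have "\<dots> = arc_weight x y (s, N) * CatB (nat L) x y * Cat (nat (N - L - 1)) x y"
    using L by (simp add: CatB_eq_sum_ncB_arcs sum_nc_arcs_eq_Cat)
  finally show ?thesis .
qed

lemma CatB_0: "CatB 0 x y = 1"
proof -
  have "A = {}" if "A \<in> ncB_arcs 0" for A
    using ncB_arcsD(1)[OF that] by fastforce
  moreover have "{} \<in> ncB_arcs 0" by (simp add: ncB_arcs_iff)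
  ultimately have "ncB_arcs 0 = {{}}" by blast
  then show ?thesis by (simp add: CatB_eq_sum_ncB_arcs positive_arcs_def arcs_weight_def)
qed

lemma CatB_convolution:
  assumes n: "n \<ge> 1"
  shows "CatB n x y
           = CatB (n-1) x y + (\<Sum>L<n. arc_weight x y (int L, int n) * CatB L x y * Cat (n-1-L) x y)
           + x * (\<Sum>L<n-1. CatB L x y * Cat (n-1-L) x y)"
proof -
  let ?X = "ncB_arcs (int n)" and ?w = "\<lambda>A. arcs_weight x y (positive_arcs A)"
  let ?Z = "\<lambda>i. \<Sum>A | A \<in> ?X \<and> (i, int n) \<in> A. ?w A"
  define K1 K2 where "K1 = int ` {..<n}" and "K2 = (\<lambda>L. - int L - 1) ` {..<n-1}"
  have K: "i \<in> K1 \<union> K2" if "A \<in> ?X" "(i, int n) \<in> A" for A i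
  proof -
    have "i \<noteq> - int n" using ncB_arcsD(5)[OF that(1), of "int n"] that(2) by auto
    then have "- int n < i" "i < int n" using ncB_arcsD(1)[OF that] by auto
    show ?thesis
    proof (cases "0 \<le> i")
      case True
      then have "i \<in> K1"
        unfolding K1_def using \<open>i < int n\<close> by (intro image_eqI[where x = "nat i"]) auto
      then show ?thesis by blast
    next
      case False
      then have "i \<in> K2"
        unfolding K2_def using \<open>- int n < i\<close> by (intro image_eqI[where x = "nat (- i - 1)"]) auto
      then show ?thesis by blast
    qed
  qed
  have "CatB n x y = (\<Sum>A | A \<in> ?X \<and> (\<forall>i. (i, int n) \<notin> A). ?w A) + (\<Sum>i\<in>K1 \<union> K2. ?Z i)"
    unfolding CatB_eq_sum_ncB_arcs
  proof (rule sum_split_by_arc_into)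
    show "finite (K1 \<union> K2)" unfolding K1_def K2_def by simp
    show "\<And>A i. A \<in> ?X \<Longrightarrow> (i, int n) \<in> A \<Longrightarrow> i \<in> K1 \<union> K2" by (rule K)
  qed (auto simp: finite_ncB_arcs dest: ncB_arcsD(3))
  also have "(\<Sum>A | A \<in> ?X \<and> (\<forall>i. (i, int n) \<notin> A). ?w A) = CatB (n-1) x y"
    using ncB_arcs_no_arc_into_last[of "int n"] n by (simp add: CatB_eq_sum_ncB_arcs of_nat_diff)
  also have "(\<Sum>i\<in>K1 \<union> K2. ?Z i) = (\<Sum>i\<in>K1. ?Z i) + (\<Sum>i\<in>K2. ?Z i)"
    by (rule sum.union_disjoint) (auto simp: K1_def K2_def)
  also have "(\<Sum>i\<in>K1. ?Z i) = (\<Sum>L<n. arc_weight x y (int L, int n) * CatB L x y * Cat (n-1-L) x y)"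
  proof -
    have "?Z (int L) = arc_weight x y (int L, int n) * CatB L x y * Cat (n-1-L) x y"
      if "L < n" for L
      using that by (subst sum_ncB_arcs_with_arc[where L = "int L"]) (auto simp: nat_diff_distrib)
    then show ?thesis unfolding K1_def by (simp add: sum.reindex)
  qed
  also have "(\<Sum>i\<in>K2. ?Z i) = x * (\<Sum>L<n-1. CatB L x y * Cat (n-1-L) x y)"
  proof -
    have "?Z (- int L - 1) = x * (CatB L x y * Cat (n-1-L) x y)" if "L < n - 1" for L
      using that by (subst sum_ncB_arcs_with_arc[where L = "int L"])
        (auto simp: nat_diff_distrib arc_weight_def)
    moreover have "inj_on (\<lambda>L. - int L - 1) {..<n-1}" by (auto intro: inj_onI)
    ultimately show ?thesis unfolding K2_def sum_distrib_left by (simp add: sum.reindex)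
  qed
  finally show ?thesis by (simp add: add.assoc)
qed

lemma CatB_recurrence:
  assumes n: "n \<ge> 1"
  shows "CatB n x y = (1+y) * CatB (n-1) x y + 2 * x * (\<Sum>i<n-1. CatB i x y * Cat (n-1-i) x y)"
proof -
  let ?f = "\<lambda>L. arc_weight x y (int L, int n) * CatB L x y * Cat (n-1-L) x y"
  have split: "{..<n} = insert (n-1) {..<n-1}" using n by auto
  have "(\<Sum>L<n. ?f L) = ?f (n-1) + (\<Sum>L<n-1. ?f L)"
    unfolding split by (subst sum.insert) auto
  also have "?f (n-1) = y * CatB (n-1) x y"
    using n by (simp add: arc_weight_def Cat_0 of_nat_diff)
  also have "(\<Sum>L<n-1. ?f L) = x * (\<Sum>i<n-1. CatB i x y * Cat (n-1-i) x y)"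
    unfolding sum_distrib_left by (rule sum.cong) (auto simp: arc_weight_def mult.assoc)
  finally show ?thesis
    using CatB_convolution[OF n, of x y] by (simp add: algebra_simps)
qed

theorem corollary6p10:
  fixes x y :: "'a::comm_ring_1" and n :: nat
  assumes "n \<ge> 2"
  shows "(of_nat (n + 1) * Cat n x y
           = (y + 1) * of_nat (2 * n - 1) * Cat (n - 1) x y
             + (4 * x - (y + 1)^2) * of_nat (n - 2) * Cat (n - 2) x y)
         \<and> (of_nat n * CatB n x y
           = (y + 1) * of_nat (2 * n - 1) * CatB (n - 1) x y
             + (4 * x - (y + 1)^2) * of_nat (n - 1) * CatB (n - 2) x y)"
proof
  show "of_nat (n + 1) * Cat n x y
           = (y + 1) * of_nat (2 * n - 1) * Cat (n - 1) x y
             + (4 * x - (y + 1)^2) * of_nat (n - 2) * Cat (n - 2) x y"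
    by (rule convolution_imp_P_recurrence[where c = "\<lambda>k. Cat k x y", OF Cat_1 Cat_recurrence assms])
  show "of_nat n * CatB n x y
           = (y + 1) * of_nat (2 * n - 1) * CatB (n - 1) x y
             + (4 * x - (y + 1)^2) * of_nat (n - 1) * CatB (n - 2) x y"
    by (rule convolutionB_imp_P_recurrence[where c = "\<lambda>k. Cat k x y" and cb = "\<lambda>k. CatB k x y",
          OF Cat_1 Cat_recurrence CatB_0 CatB_recurrence assms])
qed

end
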